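(* In the $\beta$-model, under the null $H_0:\beta_i=\beta_i^0$, $i=1,\dots,r$ with a fixed positive integer $r$, if $b_n^3/c_n=o(n/\log n)$, then with probability at least $1-O(n^{-1})$, $$\max_{i=r+1,\dots,n}|\widehat\beta_i-\widehat\beta_i^0|\lesssim\frac{b_n^3\log n}{nc_n}.$$
   Context: $\beta$-model: $a_{ij}=a_{ji}\in\{0,1\}$, $1\le i<j\le n$, independent with $P(a_{ij}=1)=e^{\beta_i+\beta_j}/(1+e^{\beta_i+\beta_j})$ where the true $\boldsymbol\beta$ satisfies the null, $a_{ii}=0$; $d_i=\sum_{j\ne i}a_{ij}$; $\ell(\boldsymbol\beta)=\sum_i\beta_id_i-\sum_{i<j}\log(1+e^{\beta_i+\beta_j})$. $\widehat{\boldsymbol\beta}=\arg\max_{\mathbb R^n}\ell$, $\widehat{\boldsymbol\beta}^0=\arg\max\{\ell(\boldsymbol\beta):(\beta_1,\dots,\beta_r)=(\beta_1^0,\dots,\beta_r^0)\}$. $b_n=\max_{i\neq j}(1+e^{\beta_i+\beta_j})^2/e^{\beta_i+\beta_j}$, $c_n=\min_{i\ne j}(\cdot)$. $x\lesssim y$ means $x\le Cy$ for a constant $C$ independent of $n$. *)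

theory Defs
  imports "HOL-Probability.Probability" "HOL-Library.Landau_Symbols"
begin

text \<open>Beta-model on vertices 0,...,n-1.  A graph is encoded by the indicator of
  its edge set on ordered pairs (i,j) with i < j; a parameter vector in R^n is a
  function nat => real of which only the entries i < n matter.\<close>

definition edge_prob :: "real \<Rightarrow> real" where
  "edge_prob x = exp x / (1 + exp x)"

definition beta_model :: "nat \<Rightarrow> (nat \<Rightarrow> real) \<Rightarrow> (nat \<times> nat \<Rightarrow> bool) pmf" where
  "beta_model n \<beta> = Pi_pmf {(i, j). i < j \<and> j < n} False
      (\<lambda>(i, j). bernoulli_pmf (edge_prob (\<beta> i + \<beta> j)))"

definition adj :: "(nat \<times> nat \<Rightarrow> bool) \<Rightarrow> nat \<Rightarrow> nat \<Rightarrow> real" where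
  "adj G i j = (if i \<noteq> j \<and> G (min i j, max i j) then 1 else 0)"

definition degree :: "nat \<Rightarrow> (nat \<times> nat \<Rightarrow> bool) \<Rightarrow> nat \<Rightarrow> real" where
  "degree n G i = (\<Sum>j\<in>{..<n} - {i}. adj G i j)"

definition loglik :: "nat \<Rightarrow> (nat \<times> nat \<Rightarrow> bool) \<Rightarrow> (nat \<Rightarrow> real) \<Rightarrow> real" where
  "loglik n G \<beta> = (\<Sum>i<n. \<beta> i * degree n G i)
      - (\<Sum>(i, j)\<in>{(i, j). i < j \<and> j < n}. ln (1 + exp (\<beta> i + \<beta> j)))"

definition is_mle :: "nat \<Rightarrow> (nat \<times> nat \<Rightarrow> bool) \<Rightarrow> (nat \<Rightarrow> real) \<Rightarrow> bool" where
  "is_mle n G b \<longleftrightarrow> (\<forall>\<beta>. loglik n G \<beta> \<le> loglik n G b)"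

definition is_restricted_mle ::
    "nat \<Rightarrow> nat \<Rightarrow> (nat \<Rightarrow> real) \<Rightarrow> (nat \<times> nat \<Rightarrow> bool) \<Rightarrow> (nat \<Rightarrow> real) \<Rightarrow> bool" where
  "is_restricted_mle n r \<beta>0 G b \<longleftrightarrow>
     (\<forall>i<r. b i = \<beta>0 i) \<and>
     (\<forall>\<beta>. (\<forall>i<r. \<beta> i = \<beta>0 i) \<longrightarrow> loglik n G \<beta> \<le> loglik n G b)"

definition bn :: "nat \<Rightarrow> (nat \<Rightarrow> real) \<Rightarrow> real" where
  "bn n \<beta> = Max {(1 + exp (\<beta> i + \<beta> j))^2 / exp (\<beta> i + \<beta> j) | i j. i < n \<and> j < n \<and> i \<noteq> j}"

definition cn :: "nat \<Rightarrow> (nat \<Rightarrow> real) \<Rightarrow> real" where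
  "cn n \<beta> = Min {(1 + exp (\<beta> i + \<beta> j))^2 / exp (\<beta> i + \<beta> j) | i j. i < n \<and> j < n \<and> i \<noteq> j}"

end

theory Submission
  imports Defs
begin

(* The score s_k(x) = (SUM j /= k. a_kj - p (x_k + x_j)), with p the logistic function, is the gradient
   of the concave log-likelihood.  By Hoeffding's inequality and a union bound, with probability at least
   1 - 2/n every score at the true beta is at most sqrt (n ln n).  On that event maximise the likelihood
   over the box of parameters within distance 1 of beta (with the first r coordinates pinned for the
   restricted problem).  On the box p' stays between m = e^-2/b_n and M = e^2/c_n, and the first-order
   condition at the maximiser x bounds |x - beta|_1 by O(b_n sqrt (n ln n)) = o(n).  Hence no free
   coordinate of x lies on the boundary of the box, x is stationary, and by strict concavity it is the
   unique (restricted) MLE.  Finally the stationarity equations of the two estimates agree in the rows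
   k >= r: pairing them with the free part of their difference bounds its l1 norm by O(r M/m), and a
   single row then gives |b_k - b0_k| = O(r (M/m)^2 / n) = O(r b_n^2 / (n c_n^2)). *)

abbreviation pairs :: "nat \<Rightarrow> (nat \<times> nat) set" where
  "pairs n \<equiv> {(i, j). i < j \<and> j < n}"

lemma finite_pairs: "finite (pairs n)"
  by (rule finite_subset[of _ "{..<n} \<times> {..<n}"]) auto

lemma pairs_Suc: "pairs (Suc n) = pairs n \<union> (\<lambda>i. (i, n)) ` {..<n}"
  by auto

lemma sum_pairs_eq_sum_rows:
  fixes S :: "nat \<Rightarrow> nat \<Rightarrow> real"
  assumes sym: "\<And>i j. S i j = S j i"
  shows "(\<Sum>(i, j)\<in>pairs n. (v i + v j) * S i j) = (\<Sum>i<n. v i * (\<Sum>j\<in>{..<n} - {i}. S i j))"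
proof (induction n)
  case 0
  then show ?case by simp
next
  case (Suc n)
  have "(\<Sum>(i, j)\<in>pairs (Suc n). (v i + v j) * S i j)
      = (\<Sum>(i, j)\<in>pairs n. (v i + v j) * S i j) + (\<Sum>(i, j)\<in>(\<lambda>i. (i, n)) ` {..<n}. (v i + v j) * S i j)"
    unfolding pairs_Suc by (rule sum.union_disjoint) (auto intro: finite_pairs)
  also have "(\<Sum>(i, j)\<in>(\<lambda>i. (i, n)) ` {..<n}. (v i + v j) * S i j) = (\<Sum>i<n. (v i + v n) * S i n)"
    by (subst sum.reindex) (auto simp: inj_on_def)
  finally have lhs: "(\<Sum>(i, j)\<in>pairs (Suc n). (v i + v j) * S i j)
      = (\<Sum>i<n. v i * (\<Sum>j\<in>{..<n} - {i}. S i j)) + (\<Sum>i<n. (v i + v n) * S i n)"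
    using Suc by simp
  have row: "insert n {..<n} - {i} = insert n ({..<n} - {i})" if "i < n" for i
    using that by auto
  have "(\<Sum>i<Suc n. v i * (\<Sum>j\<in>{..<Suc n} - {i}. S i j))
      = (\<Sum>i<n. v i * (S i n + (\<Sum>j\<in>{..<n} - {i}. S i j))) + v n * (\<Sum>j<n. S n j)"
    by (simp add: row lessThan_Suc)
  then show ?case
    unfolding lhs by (simp add: algebra_simps sum.distrib sum_distrib_left sym)
qed

lemma sum_pairs_square:
  fixes u :: "nat \<Rightarrow> real"
  shows "(\<Sum>(i, j)\<in>pairs n. (u i + u j)^2) = (real n - 2) * (\<Sum>k<n. (u k)^2) + (\<Sum>k<n. u k)^2"
proof -
  have row: "(\<Sum>j\<in>{..<n} - {k}. u k + u j) = (real n - 2) * u k + (\<Sum>j<n. u j)" if "k < n" for k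
    using that by (simp add: sum.distrib sum_diff1 of_nat_diff algebra_simps)
  have "(\<Sum>(i, j)\<in>pairs n. (u i + u j)^2) = (\<Sum>k<n. u k * (\<Sum>j\<in>{..<n} - {k}. u k + u j))"
    unfolding power2_eq_square by (rule sum_pairs_eq_sum_rows) (simp add: add.commute)
  also have "\<dots> = (\<Sum>k<n. (real n - 2) * (u k)^2 + u k * (\<Sum>j<n. u j))"
    by (intro sum.cong refl) (simp add: row algebra_simps power2_eq_square)
  also have "\<dots> = (real n - 2) * (\<Sum>k<n. (u k)^2) + (\<Sum>k<n. u k)^2"
    by (simp add: sum.distrib sum_distrib_left[symmetric] sum_distrib_right[symmetric] power2_eq_square)
  finally show ?thesis .
qed

lemma sum_abs_le_if_sum_squares_le:
  fixes u :: "'a \<Rightarrow> real"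
  assumes "finite I" "c > 0" "A \<ge> 0"
    and "c * (\<Sum>k\<in>I. (u k)^2) \<le> A * (\<Sum>k\<in>I. \<bar>u k\<bar>)"
  shows "(\<Sum>k\<in>I. \<bar>u k\<bar>) \<le> real (card I) * A / c"
proof -
  define s where "s = (\<Sum>k\<in>I. \<bar>u k\<bar>)"
  have "s \<ge> 0"
    unfolding s_def by (simp add: sum_nonneg)
  have cauchy_schwarz: "s^2 \<le> (\<Sum>k\<in>I. (u k)^2) * real (card I)"
    using sum_squared_le_sum_of_squares[of "\<lambda>k. \<bar>u k\<bar>" I] assms(1) by (simp add: s_def)
  have "c * s * s \<le> c * ((\<Sum>k\<in>I. (u k)^2) * real (card I))"
    using cauchy_schwarz \<open>c > 0\<close> by (simp add: power2_eq_square)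
  also have "\<dots> \<le> (A * s) * real (card I)"
    using assms(4) by (simp add: s_def mult.assoc[symmetric] mult_right_mono)
  finally have "(c * s) * s \<le> (real (card I) * A) * s"
    by (simp add: algebra_simps)
  then have "c * s \<le> real (card I) * A"
    using \<open>s \<ge> 0\<close> assms(3) by (cases "s = 0") auto
  then show ?thesis
    using \<open>c > 0\<close> by (simp add: s_def field_simps)
qed

lemma sum_abs_le_if_supported_below:
  fixes f :: "nat \<Rightarrow> real"
  assumes "\<And>j. j < n \<Longrightarrow> r \<le> j \<Longrightarrow> f j = 0" and "\<And>j. j < n \<Longrightarrow> j < r \<Longrightarrow> \<bar>f j\<bar> \<le> c"
    and "c \<ge> 0"
  shows "(\<Sum>j<n. \<bar>f j\<bar>) \<le> real r * c"
proof -
  have "(\<Sum>j<n. \<bar>f j\<bar>) = (\<Sum>j\<in>{..<n} \<inter> {..<r}. \<bar>f j\<bar>)"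
    using assms(1) by (intro sum.mono_neutral_right) (auto, meson not_le)
  also have "\<dots> \<le> (\<Sum>j\<in>{..<n} \<inter> {..<r}. c)"
    using assms(2) by (intro sum_mono) auto
  also have "\<dots> \<le> real r * c"
    using card_mono[of "{..<r}" "{..<n} \<inter> {..<r}"] \<open>c \<ge> 0\<close> by (simp add: mult_right_mono)
  finally show ?thesis .
qed

lemma mult_mean_value_ge:
  fixes m M w p q :: real
  assumes "0 \<le> m" "m \<le> w" "w \<le> M"
  shows "m * p^2 - M * \<bar>p\<bar> * \<bar>q\<bar> \<le> p * (w * (p + q))"
proof -
  have "m * p^2 \<le> w * p^2"
    using assms by (intro mult_right_mono) auto
  moreover have "- (w * \<bar>p * q\<bar>) \<le> w * (p * q)"
    using assms mult_left_mono[of "- \<bar>p * q\<bar>" "p * q" w] by simp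
  moreover have "w * \<bar>p * q\<bar> \<le> M * \<bar>p\<bar> * \<bar>q\<bar>"
    using assms mult_right_mono[of w M "\<bar>p * q\<bar>"] by (simp add: abs_mult mult.assoc)
  moreover have "p * (w * (p + q)) = w * p^2 + w * (p * q)"
    by (simp add: algebra_simps power2_eq_square)
  ultimately show ?thesis
    by linarith
qed

lemma one_plus_exp_pos: "0 < 1 + exp (t::real)"
  using exp_gt_zero[of t] by linarith

definition edge_var :: "real \<Rightarrow> real" where
  "edge_var t = exp t / (1 + exp t)^2"

lemma inverse_edge_var: "1 / edge_var t = exp (- t) + 2 + exp t"
  unfolding edge_var_def by (simp add: power2_eq_square field_simps exp_minus)

lemma edge_var_pos: "0 < edge_var t"
  unfolding edge_var_def using one_plus_exp_pos[of t] by simp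

lemma edge_prob_has_real_derivative: "(edge_prob has_real_derivative edge_var t) (at t)"
  unfolding edge_prob_def edge_var_def using one_plus_exp_pos[of t]
  by (auto intro!: derivative_eq_intros simp: power2_eq_square field_simps)

lemma ln_one_plus_exp_has_real_derivative:
  "((\<lambda>t. ln (1 + exp t)) has_real_derivative edge_prob t) (at t)"
  unfolding edge_prob_def using one_plus_exp_pos[of t]
  by (auto intro!: derivative_eq_intros simp: field_simps)

lemma strict_mono_edge_prob: "strict_mono edge_prob"
  by (rule strict_monoI, rule DERIV_pos_imp_increasing)
    (use edge_prob_has_real_derivative edge_var_pos in blast)+

lemma edge_prob_bounds: "0 \<le> edge_prob t" "edge_prob t \<le> 1"
  unfolding edge_prob_def using one_plus_exp_pos[of t] by auto

lemma ln_one_plus_exp_ge_tangent: "ln (1 + exp a) + edge_prob a * (b - a) \<le> ln (1 + exp b)"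
proof -
  have "convex_on UNIV (\<lambda>t. ln (1 + exp t))"
    using ln_one_plus_exp_has_real_derivative strict_mono_edge_prob
    by (intro convex_on_realI[where f' = edge_prob]) (auto simp: strict_mono_less_eq)
  from convex_on_imp_above_tangent[OF this] show ?thesis
    using ln_one_plus_exp_has_real_derivative by (fastforce simp: algebra_simps)
qed

lemma edge_var_ratio:
  assumes "\<bar>s - t\<bar> \<le> h"
  shows "exp (- h) * edge_var t \<le> edge_var s"
proof -
  have "exp (- s) \<le> exp h * exp (- t)" "exp s \<le> exp h * exp t" "1 \<le> exp h"
    using assms by (simp_all flip: exp_add)
  then have "1 / edge_var s \<le> exp h * (1 / edge_var t)"
    unfolding inverse_edge_var distrib_left by linarith
  then show ?thesis
    using edge_var_pos[of s] edge_var_pos[of t] by (simp add: field_simps exp_minus)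
qed

(* The radius 2 is what the pair sums x_i + x_j see when x ranges over param_box (radius 1). *)
definition edge_var_bounded_near :: "real \<Rightarrow> real \<Rightarrow> real \<Rightarrow> bool" where
  "edge_var_bounded_near m M t \<longleftrightarrow> (\<forall>s. \<bar>s - t\<bar> \<le> 2 \<longrightarrow> m \<le> edge_var s \<and> edge_var s \<le> M)"

lemma edge_prob_diff_mean_value:
  assumes "edge_var_bounded_near m M t" and "\<bar>a - t\<bar> \<le> 2" and "\<bar>a' - t\<bar> \<le> 2"
  shows "\<exists>w. m \<le> w \<and> w \<le> M \<and> edge_prob a' - edge_prob a = w * (a' - a)"
proof -
  have ordered: "\<exists>w. m \<le> w \<and> w \<le> M \<and> edge_prob b' - edge_prob b = w * (b' - b)"
    if "b < b'" "\<bar>b - t\<bar> \<le> 2" "\<bar>b' - t\<bar> \<le> 2" for b b'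
  proof -
    obtain z where "b < z" "z < b'" "edge_prob b' - edge_prob b = (b' - b) * edge_var z"
      using MVT2[OF \<open>b < b'\<close>] edge_prob_has_real_derivative by blast
    moreover have "\<bar>z - t\<bar> \<le> 2"
      using that \<open>b < z\<close> \<open>z < b'\<close> by linarith
    ultimately show ?thesis
      using assms(1) unfolding edge_var_bounded_near_def by (metis mult.commute)
  qed
  have "m \<le> M"
    using assms(1) unfolding edge_var_bounded_near_def by (metis abs_zero diff_self order.trans zero_le_numeral)
  then consider "a = a'" | "a < a'" | "a' < a"
    by linarith
  then show ?thesis
  proof cases
    case 1
    then show ?thesis using \<open>m \<le> M\<close> by auto
  next
    case 2
    then show ?thesis using ordered assms(2,3) by blast
  next
    case 3
    then obtain w where "m \<le> w" "w \<le> M" "edge_prob a - edge_prob a' = w * (a - a')"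
      using ordered assms(2,3) by blast
    then show ?thesis by (intro exI[of _ w]) (simp add: algebra_simps)
  qed
qed

definition score :: "nat \<Rightarrow> (nat \<times> nat \<Rightarrow> bool) \<Rightarrow> (nat \<Rightarrow> real) \<Rightarrow> nat \<Rightarrow> real" where
  "score n G x k = (\<Sum>j\<in>{..<n} - {k}. adj G k j - edge_prob (x k + x j))"

definition loglik_deriv ::
    "nat \<Rightarrow> (nat \<times> nat \<Rightarrow> bool) \<Rightarrow> (nat \<Rightarrow> real) \<Rightarrow> (nat \<Rightarrow> real) \<Rightarrow> real" where
  "loglik_deriv n G x v = (\<Sum>k<n. v k * score n G x k)"

lemma adj_commute: "adj G i j = adj G j i"
  unfolding adj_def by (auto simp: min.commute max.commute)

lemma loglik_eq_sum_pairs: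
  "loglik n G x = (\<Sum>(i, j)\<in>pairs n. (x i + x j) * adj G i j - ln (1 + exp (x i + x j)))"
proof -
  have "(\<Sum>i<n. x i * degree n G i) = (\<Sum>(i, j)\<in>pairs n. (x i + x j) * adj G i j)"
    unfolding degree_def by (rule sum_pairs_eq_sum_rows[symmetric]) (rule adj_commute)
  then show ?thesis
    unfolding loglik_def by (simp add: sum_subtractf case_prod_beta)
qed

lemma loglik_deriv_eq_sum_pairs:
  "loglik_deriv n G x v = (\<Sum>(i, j)\<in>pairs n. (v i + v j) * (adj G i j - edge_prob (x i + x j)))"
  unfolding loglik_deriv_def score_def
  by (rule sum_pairs_eq_sum_rows[symmetric]) (simp add: adj_commute add.commute)

lemma loglik_le_tangent: "loglik n G y \<le> loglik n G x + loglik_deriv n G x (\<lambda>i. y i - x i)"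
proof -
  have "loglik n G y - loglik n G x - loglik_deriv n G x (\<lambda>i. y i - x i)
     = (\<Sum>(i, j)\<in>pairs n. ln (1 + exp (x i + x j)) + edge_prob (x i + x j) * ((y i + y j) - (x i + x j))
                          - ln (1 + exp (y i + y j)))"
    unfolding loglik_eq_sum_pairs loglik_deriv_eq_sum_pairs
    by (simp add: sum_subtractf[symmetric] case_prod_beta algebra_simps)
  also have "\<dots> \<le> 0"
    using ln_one_plus_exp_ge_tangent by (intro sum_nonpos) (simp add: case_prod_beta)
  finally show ?thesis by simp
qed

lemma loglik_line_has_real_derivative:
  "((\<lambda>t. loglik n G (\<lambda>i. x i + t * v i)) has_real_derivative
      loglik_deriv n G (\<lambda>i. x i + t0 * v i) v) (at t0)"
proof -
  have "((\<lambda>t. (a + t * b) * c - ln (1 + exp (a + t * b))) has_real_derivative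
      b * (c - edge_prob (a + t0 * b))) (at t0)" for a b c :: real
  proof -
    have line: "((\<lambda>t. a + t * b) has_real_derivative b) (at t0)"
      by (auto intro!: derivative_eq_intros)
    have "((\<lambda>t. (a + t * b) * c - ln (1 + exp (a + t * b))) has_real_derivative
        b * c - edge_prob (a + t0 * b) * b) (at t0)"
      by (intro DERIV_diff DERIV_cmult_right line DERIV_chain2[OF ln_one_plus_exp_has_real_derivative])
    then show ?thesis
      by (simp add: algebra_simps)
  qed
  then have "((\<lambda>t. \<Sum>(i, j)\<in>pairs n. (x i + x j + t * (v i + v j)) * adj G i j
                                      - ln (1 + exp (x i + x j + t * (v i + v j))))
      has_real_derivative (\<Sum>(i, j)\<in>pairs n. (v i + v j) * (adj G i j - edge_prob (x i + x j + t0 * (v i + v j))))) (at t0)"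
    unfolding case_prod_beta by (intro DERIV_sum)
  then show ?thesis
    unfolding loglik_eq_sum_pairs loglik_deriv_eq_sum_pairs by (simp add: algebra_simps)
qed

lemma loglik_deriv_nonpos_if_max_on_segment:
  assumes "d > 0" and "\<And>t. 0 < t \<Longrightarrow> t < d \<Longrightarrow> loglik n G (\<lambda>i. x i + t * v i) \<le> loglik n G x"
  shows "loglik_deriv n G x v \<le> 0"
proof (rule ccontr)
  assume "\<not> loglik_deriv n G x v \<le> 0"
  then have "loglik_deriv n G (\<lambda>i. x i + 0 * v i) v > 0"
    by simp
  from DERIV_pos_inc_right[OF loglik_line_has_real_derivative this]
  obtain e where "e > 0"
    and inc: "\<And>h. h > 0 \<Longrightarrow> h < e \<Longrightarrow> loglik n G x < loglik n G (\<lambda>i. x i + h * v i)"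
    by auto
  define h where "h = min e d / 2"
  have "0 < h" "h < e" "h < d"
    using \<open>e > 0\<close> \<open>d > 0\<close> by (auto simp: h_def)
  with inc assms(2) show False
    by fastforce
qed

lemma loglik_deriv_unit:
  assumes "k < n"
  shows "loglik_deriv n G x (\<lambda>i. if i = k then c else 0) = c * score n G x k"
proof -
  have "loglik_deriv n G x (\<lambda>i. if i = k then c else 0) = (\<Sum>i<n. if i = k then c * score n G x k else 0)"
    unfolding loglik_deriv_def by (intro sum.cong) auto
  then show ?thesis
    using assms by simp
qed

lemma score_eq_0_if_restricted_max:
  assumes max: "\<And>y. (\<forall>i<r. y i = x i) \<Longrightarrow> loglik n G y \<le> loglik n G x"
    and "r \<le> k" "k < n"
  shows "score n G x k = 0"
proof -
  have "c * score n G x k \<le> 0" for c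
  proof -
    have "loglik_deriv n G x (\<lambda>i. if i = k then c else 0) \<le> 0"
      using max \<open>r \<le> k\<close> by (intro loglik_deriv_nonpos_if_max_on_segment[of 1]) auto
    then show ?thesis
      using loglik_deriv_unit[OF \<open>k < n\<close>] by simp
  qed
  from this[of 1] this[of "-1"] show ?thesis
    by simp
qed

lemma restricted_max_if_score_eq_0:
  assumes "\<And>k. r \<le> k \<Longrightarrow> k < n \<Longrightarrow> score n G x k = 0" and "\<forall>i<r. y i = x i"
  shows "loglik n G y \<le> loglik n G x"
proof -
  have "loglik_deriv n G x (\<lambda>i. y i - x i) = 0"
    unfolding loglik_deriv_def using assms by (intro sum.neutral) (metis diff_self lessThan_iff mult_eq_0_iff not_le)
  then show ?thesis
    using loglik_le_tangent[of n G y x] by simp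
qed

(* Strict concavity: the difference v of two such points satisfies v_i + v_j = 0 for every pair,
   and with three vertices this forces v = 0. *)
lemma stationary_points_eq:
  assumes "n \<ge> 3"
    and score_x: "\<And>k. r \<le> k \<Longrightarrow> k < n \<Longrightarrow> score n G x k = 0"
    and score_y: "\<And>k. r \<le> k \<Longrightarrow> k < n \<Longrightarrow> score n G y k = 0"
    and "\<forall>i<r. x i = y i" and "i < n"
  shows "x i = y i"
proof -
  define v where "v i = y i - x i" for i
  have deriv_0: "loglik_deriv n G z v = 0" if "\<And>k. r \<le> k \<Longrightarrow> k < n \<Longrightarrow> score n G z k = 0" for z
    unfolding loglik_deriv_def using that assms(4)
    by (intro sum.neutral) (metis diff_self lessThan_iff mult_eq_0_iff not_le v_def)
  define T where "T i j = (v i + v j) * (edge_prob (y i + y j) - edge_prob (x i + x j))" for i j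
  have "(\<Sum>(i, j)\<in>pairs n. T i j) = loglik_deriv n G x v - loglik_deriv n G y v"
    unfolding loglik_deriv_eq_sum_pairs T_def by (simp add: sum_subtractf[symmetric] case_prod_beta algebra_simps)
  also have "\<dots> = 0"
    using deriv_0[OF score_x] deriv_0[OF score_y] by simp
  finally have sum_T: "(\<Sum>(i, j)\<in>pairs n. T i j) = 0" .
  have T_nonneg: "T i j \<ge> 0" for i j
    using strict_mono_edge_prob[THEN strict_mono_less_eq]
    unfolding T_def v_def by (cases "x i + x j \<le> y i + y j") (auto intro: mult_nonneg_nonneg mult_nonpos_nonpos)
  have pair_0: "v i + v j = 0" if "i < j" "j < n" for i j
  proof -
    have "T i j = 0"
      using sum_nonneg_eq_0_iff[OF finite_pairs, where f = "\<lambda>(i, j). T i j"] sum_T T_nonneg that by auto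
    then show ?thesis
      using strict_mono_edge_prob[THEN strict_mono_eq] unfolding T_def v_def by auto
  qed
  have distinct_0: "v i + v j = 0" if "i < n" "j < n" "i \<noteq> j" for i j
    using pair_0[of i j] pair_0[of j i] that by (cases "i < j") (auto simp: add.commute)
  obtain j k where "j < n" "k < n" "i \<noteq> j" "i \<noteq> k" "j \<noteq> k"
  proof -
    consider "i = 0" | "i = 1" | "i \<ge> 2"
      by linarith
    then show thesis
      using that[of 1 2] that[of 0 2] that[of 0 1] \<open>n \<ge> 3\<close> \<open>i < n\<close> by cases auto
  qed
  then have "v i + v j = 0" "v i + v k = 0" "v j + v k = 0"
    using distinct_0 \<open>i < n\<close> by auto
  then have "v i = 0"
    by linarith
  then show ?thesis
    by (simp add: v_def)
qed

lemma is_mle_iff_restricted_mle_0: "is_mle n G b \<longleftrightarrow> is_restricted_mle n 0 \<beta> G b"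
  unfolding is_mle_def is_restricted_mle_def by simp

lemma restricted_mle_score_eq_0:
  "is_restricted_mle n r \<beta> G b \<Longrightarrow> r \<le> k \<Longrightarrow> k < n \<Longrightarrow> score n G b k = 0"
  unfolding is_restricted_mle_def by (rule score_eq_0_if_restricted_max) auto

lemma restricted_mle_if_stationary:
  assumes "\<forall>i<r. x i = \<beta> i" and "\<And>k. r \<le> k \<Longrightarrow> k < n \<Longrightarrow> score n G x k = 0"
  shows "is_restricted_mle n r \<beta> G x"
  unfolding is_restricted_mle_def using assms restricted_max_if_score_eq_0[OF assms(2)] by auto

lemma restricted_mle_eq_stationary:
  assumes "3 \<le> n" and "is_restricted_mle n r \<beta> G b"
    and "\<forall>i<r. x i = \<beta> i" and "\<And>k. r \<le> k \<Longrightarrow> k < n \<Longrightarrow> score n G x k = 0" and "i < n"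
  shows "b i = x i"
proof -
  have "\<forall>i<r. b i = x i"
    using assms(2,3) unfolding is_restricted_mle_def by simp
  from stationary_points_eq[OF assms(1) restricted_mle_score_eq_0[OF assms(2)] assms(4) this assms(5)]
  show ?thesis .
qed

lemma continuous_on_loglik: "continuous_on UNIV (loglik n G)"
proof -
  have "continuous_on UNIV (\<lambda>x::nat \<Rightarrow> real. \<Sum>(i, j)\<in>pairs n. (x i + x j) * adj G i j - ln (1 + exp (x i + x j)))"
    unfolding case_prod_beta using one_plus_exp_pos
    by (intro continuous_intros continuous_on_component) (auto simp: less_imp_neq[symmetric])
  then show ?thesis
    unfolding loglik_eq_sum_pairs[abs_def] .
qed

definition param_box :: "(nat \<Rightarrow> real) \<Rightarrow> nat \<Rightarrow> nat \<Rightarrow> (nat \<Rightarrow> real) set" where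
  "param_box \<beta> r n = PiE UNIV (\<lambda>i. if r \<le> i \<and> i < n then cball (\<beta> i) 1 else {\<beta> i})"

lemma mem_param_box:
  "z \<in> param_box \<beta> r n \<longleftrightarrow> (\<forall>i. if r \<le> i \<and> i < n then \<bar>z i - \<beta> i\<bar> \<le> 1 else z i = \<beta> i)"
proof -
  have "z i \<in> (if r \<le> i \<and> i < n then cball (\<beta> i) 1 else {\<beta> i})
      \<longleftrightarrow> (if r \<le> i \<and> i < n then \<bar>z i - \<beta> i\<bar> \<le> 1 else z i = \<beta> i)" for i
    by (simp add: dist_real_def abs_minus_commute)
  then show ?thesis
    unfolding param_box_def PiE_iff by simp
qed

lemma compact_param_box: "compact (param_box \<beta> r n)"
proof -
  have "compactin (product_topology (\<lambda>i. euclidean) UNIV) (param_box \<beta> r n)"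
    unfolding param_box_def by (subst compactin_PiE) auto
  then show ?thesis
    by (simp add: euclidean_product_topology)
qed

lemma param_box_dist_le: "z \<in> param_box \<beta> r n \<Longrightarrow> i < n \<Longrightarrow> \<bar>z i - \<beta> i\<bar> \<le> 1"
  unfolding mem_param_box by (metis abs_zero diff_self order_refl zero_le_one)

lemma param_box_pinned: "z \<in> param_box \<beta> r n \<Longrightarrow> \<forall>i<r. z i = \<beta> i"
  unfolding mem_param_box by (metis not_le)

lemma param_box_segment:
  assumes "x \<in> param_box \<beta> r n" "z \<in> param_box \<beta> r n" "0 \<le> t" "t \<le> 1"
  shows "(\<lambda>i. x i + t * (z i - x i)) \<in> param_box \<beta> r n"
proof -
  have "\<bar>x i + t * (z i - x i) - \<beta> i\<bar> \<le> 1" if "i < n" for i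
  proof -
    have "\<bar>x i + t * (z i - x i) - \<beta> i\<bar> = \<bar>(1 - t) * (x i - \<beta> i) + t * (z i - \<beta> i)\<bar>"
      by (simp add: algebra_simps)
    also have "\<dots> \<le> \<bar>(1 - t) * (x i - \<beta> i)\<bar> + \<bar>t * (z i - \<beta> i)\<bar>"
      by (rule abs_triangle_ineq)
    also have "\<dots> = (1 - t) * \<bar>x i - \<beta> i\<bar> + t * \<bar>z i - \<beta> i\<bar>"
      using assms(3,4) by (simp add: abs_mult)
    also have "\<dots> \<le> (1 - t) * 1 + t * 1"
      using assms param_box_dist_le \<open>i < n\<close> by (intro add_mono mult_left_mono) auto
    finally show ?thesis
      by simp
  qed
  then show ?thesis
    using assms(1,2) unfolding mem_param_box by (auto split: if_splits)
qed

lemma exists_param_box_maximiser: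
  "\<exists>x\<in>param_box \<beta> r n. \<forall>z\<in>param_box \<beta> r n. loglik n G z \<le> loglik n G x"
proof -
  have "\<beta> \<in> param_box \<beta> r n"
    unfolding mem_param_box by simp
  then show ?thesis
    using continuous_attains_sup[OF compact_param_box _ continuous_on_subset[OF continuous_on_loglik]] by blast
qed

lemma loglik_deriv_nonpos_at_param_box_maximiser:
  assumes "x \<in> param_box \<beta> r n" and max: "\<forall>z\<in>param_box \<beta> r n. loglik n G z \<le> loglik n G x"
    and "z \<in> param_box \<beta> r n"
  shows "loglik_deriv n G x (\<lambda>i. z i - x i) \<le> 0"
  using param_box_segment[OF assms(1,3)] max by (intro loglik_deriv_nonpos_if_max_on_segment[of 1]) auto

lemma score_sign_at_param_box_maximiser:
  assumes x_box: "x \<in> param_box \<beta> r n" and max: "\<forall>z\<in>param_box \<beta> r n. loglik n G z \<le> loglik n G x"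
    and "r \<le> k" "k < n" and "\<bar>x k + c - \<beta> k\<bar> \<le> 1"
  shows "c * score n G x k \<le> 0"
proof -
  have "x(k := x k + c) \<in> param_box \<beta> r n"
    using x_box assms(3-5) unfolding mem_param_box by auto
  from loglik_deriv_nonpos_at_param_box_maximiser[OF x_box max this]
  have "loglik_deriv n G x (\<lambda>i. (x(k := x k + c)) i - x i) \<le> 0" .
  moreover have "(\<lambda>i. (x(k := x k + c)) i - x i) = (\<lambda>i. if i = k then c else 0)"
    by auto
  ultimately show ?thesis
    using loglik_deriv_unit[OF \<open>k < n\<close>] by simp
qed

lemma sum_pairs_disjoint_support_le:
  fixes f g :: "nat \<Rightarrow> real"
  assumes f0: "\<And>k. k < r \<Longrightarrow> f k = 0" and g0: "\<And>k. r \<le> k \<Longrightarrow> g k = 0"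
    and g_le: "\<And>k. k < n \<Longrightarrow> \<bar>g k\<bar> \<le> c" and "c \<ge> 0"
  shows "(\<Sum>(i, j)\<in>pairs n. (\<bar>f i\<bar> + \<bar>f j\<bar>) * (\<bar>g i\<bar> + \<bar>g j\<bar>)) \<le> real r * c * (\<Sum>k<n. \<bar>f k\<bar>)"
proof -
  have "(\<Sum>(i, j)\<in>pairs n. (\<bar>f i\<bar> + \<bar>f j\<bar>) * (\<bar>g i\<bar> + \<bar>g j\<bar>))
      = (\<Sum>i<n. \<bar>f i\<bar> * (\<Sum>j\<in>{..<n} - {i}. \<bar>g i\<bar> + \<bar>g j\<bar>))"
    by (rule sum_pairs_eq_sum_rows) (simp add: add.commute)
  also have "\<dots> \<le> (\<Sum>i<n. \<bar>f i\<bar> * (real r * c))"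
  proof (rule sum_mono)
    fix i
    show "\<bar>f i\<bar> * (\<Sum>j\<in>{..<n} - {i}. \<bar>g i\<bar> + \<bar>g j\<bar>) \<le> \<bar>f i\<bar> * (real r * c)"
    proof (cases "r \<le> i")
      case False
      then show ?thesis using f0 by simp
    next
      case True
      have "(\<Sum>j\<in>{..<n} - {i}. \<bar>g i\<bar> + \<bar>g j\<bar>) = (\<Sum>j\<in>{..<n} - {i}. \<bar>g j\<bar>)"
        using g0[OF True] by simp
      also have "\<dots> \<le> (\<Sum>j<n. \<bar>g j\<bar>)"
        by (intro sum_mono2) auto
      also have "\<dots> \<le> real r * c"
        using g0 g_le \<open>c \<ge> 0\<close> by (intro sum_abs_le_if_supported_below)
      finally show ?thesis
        by (intro mult_left_mono) auto
    qed
  qed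
  also have "\<dots> = real r * c * (\<Sum>k<n. \<bar>f k\<bar>)"
    by (simp add: sum_distrib_left mult.commute)
  finally show ?thesis .
qed

context
  fixes n :: nat and \<beta> :: "nat \<Rightarrow> real" and m M :: real
  assumes n_ge_3: "3 \<le> n" and m_pos: "0 < m"
    and window: "\<And>i j. i < n \<Longrightarrow> j < n \<Longrightarrow> i \<noteq> j \<Longrightarrow> edge_var_bounded_near m M (\<beta> i + \<beta> j)"
begin

lemma m_le_M: "m \<le> M"
proof -
  have "edge_var_bounded_near m M (\<beta> 0 + \<beta> 1)"
    using window[of 0 1] n_ge_3 by simp
  then show ?thesis
    unfolding edge_var_bounded_near_def by (metis abs_zero diff_self order.trans zero_le_numeral)
qed

lemma edge_prob_diff_near:
  assumes "i < n" "j < n" "i \<noteq> j"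
    and "\<bar>x i - \<beta> i\<bar> \<le> 1" "\<bar>x j - \<beta> j\<bar> \<le> 1" "\<bar>y i - \<beta> i\<bar> \<le> 1" "\<bar>y j - \<beta> j\<bar> \<le> 1"
  shows "\<exists>w. m \<le> w \<and> w \<le> M \<and>
           edge_prob (x i + x j) - edge_prob (y i + y j) = w * ((x i - y i) + (x j - y j))"
proof -
  have "\<bar>y i + y j - (\<beta> i + \<beta> j)\<bar> \<le> 2" "\<bar>x i + x j - (\<beta> i + \<beta> j)\<bar> \<le> 2"
    using assms(4-7) by (simp_all add: abs_le_iff)
  from edge_prob_diff_mean_value[OF window[OF assms(1-3)] this] show ?thesis
    by (simp add: algebra_simps)
qed

lemma edge_prob_diff_split_ge:
  assumes near_x: "\<And>i. i < n \<Longrightarrow> \<bar>x i - \<beta> i\<bar> \<le> 1" and near_y: "\<And>i. i < n \<Longrightarrow> \<bar>y i - \<beta> i\<bar> \<le> 1"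
    and split: "\<And>i. x i - y i = D1 i + D2 i" and "i < j" "j < n"
  shows "m * (D1 i + D1 j)^2 - M * ((\<bar>D1 i\<bar> + \<bar>D1 j\<bar>) * (\<bar>D2 i\<bar> + \<bar>D2 j\<bar>))
      \<le> (D1 i + D1 j) * (edge_prob (x i + x j) - edge_prob (y i + y j))"
proof -
  have "(x i - y i) + (x j - y j) = (D1 i + D1 j) + (D2 i + D2 j)"
    by (simp add: split)
  then obtain w where w: "m \<le> w" "w \<le> M"
    "edge_prob (x i + x j) - edge_prob (y i + y j) = w * ((D1 i + D1 j) + (D2 i + D2 j))"
    using edge_prob_diff_near[of i j x y, OF _ _ _ near_x near_x near_y near_y] assms(4,5) by auto
  have "\<bar>D1 i + D1 j\<bar> * \<bar>D2 i + D2 j\<bar> \<le> (\<bar>D1 i\<bar> + \<bar>D1 j\<bar>) * (\<bar>D2 i\<bar> + \<bar>D2 j\<bar>)"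
    by (intro mult_mono abs_triangle_ineq) auto
  then have "M * \<bar>D1 i + D1 j\<bar> * \<bar>D2 i + D2 j\<bar> \<le> M * ((\<bar>D1 i\<bar> + \<bar>D1 j\<bar>) * (\<bar>D2 i\<bar> + \<bar>D2 j\<bar>))"
    using m_pos w by (simp add: mult.assoc mult_left_mono)
  then show ?thesis
    using mult_mean_value_ge[of m w M "D1 i + D1 j" "D2 i + D2 j"] m_pos w(1,2) unfolding w(3) by linarith
qed

(* Rows k >= r of the two stationarity systems agree.  Pairing them with the free part D1 of x - y
   gives a quadratic form of size at least m (n - 2) |D1|^2, to which the pinned part D2 contributes
   at most 2 r M |D1|_1. *)
lemma stationary_diff_l1_bound:
  assumes near_x: "\<And>i. i < n \<Longrightarrow> \<bar>x i - \<beta> i\<bar> \<le> 1" and near_y: "\<And>i. i < n \<Longrightarrow> \<bar>y i - \<beta> i\<bar> \<le> 1"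
    and score_x: "\<And>k. r \<le> k \<Longrightarrow> k < n \<Longrightarrow> score n G x k = 0"
    and score_y: "\<And>k. r \<le> k \<Longrightarrow> k < n \<Longrightarrow> score n G y k = 0"
  shows "(\<Sum>k\<in>{r..<n}. \<bar>x k - y k\<bar>) \<le> real n * (2 * real r * M) / (m * (real n - 2))"
proof -
  define D1 where "D1 i = (if r \<le> i then x i - y i else 0)" for i
  define D2 where "D2 i = (if r \<le> i then 0 else x i - y i)" for i
  define S where "S i j = edge_prob (x i + x j) - edge_prob (y i + y j)" for i j
  have diff_le_2: "\<bar>x k - y k\<bar> \<le> 2" if "k < n" for k
    using near_x[OF that] near_y[OF that] by (auto simp: abs_le_iff)
  have "(\<Sum>(i, j)\<in>pairs n. (D1 i + D1 j) * S i j) = (\<Sum>i<n. D1 i * (\<Sum>j\<in>{..<n} - {i}. S i j))"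
    by (rule sum_pairs_eq_sum_rows) (simp add: S_def add.commute)
  also have "\<dots> = 0"
  proof (intro sum.neutral ballI)
    fix i assume "i \<in> {..<n}"
    have "(\<Sum>j\<in>{..<n} - {i}. S i j) = score n G y i - score n G x i"
      unfolding score_def S_def by (simp add: sum_subtractf[symmetric])
    then show "D1 i * (\<Sum>j\<in>{..<n} - {i}. S i j) = 0"
      using score_x score_y \<open>i \<in> {..<n}\<close> by (simp add: D1_def)
  qed
  finally have energy: "(\<Sum>(i, j)\<in>pairs n. (D1 i + D1 j) * S i j) = 0" .
  have pair_lb: "m * (D1 i + D1 j)^2 - M * ((\<bar>D1 i\<bar> + \<bar>D1 j\<bar>) * (\<bar>D2 i\<bar> + \<bar>D2 j\<bar>))
      \<le> (D1 i + D1 j) * S i j" if "i < j" "j < n" for i j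
  proof -
    have "x i - y i = D1 i + D2 i" for i
      by (simp add: D1_def D2_def)
    with that show ?thesis
      unfolding S_def by (intro edge_prob_diff_split_ge[OF near_x near_y])
  qed
  have "(\<Sum>(i, j)\<in>pairs n. m * (D1 i + D1 j)^2 - M * ((\<bar>D1 i\<bar> + \<bar>D1 j\<bar>) * (\<bar>D2 i\<bar> + \<bar>D2 j\<bar>))) \<le> 0"
    unfolding energy[symmetric] using pair_lb by (intro sum_mono) auto
  moreover have "m * ((real n - 2) * (\<Sum>k<n. (D1 k)^2)) \<le> m * (\<Sum>(i, j)\<in>pairs n. (D1 i + D1 j)^2)"
    using m_pos by (intro mult_left_mono) (simp_all add: sum_pairs_square)
  ultimately have "m * ((real n - 2) * (\<Sum>k<n. (D1 k)^2))
      \<le> M * (\<Sum>(i, j)\<in>pairs n. (\<bar>D1 i\<bar> + \<bar>D1 j\<bar>) * (\<bar>D2 i\<bar> + \<bar>D2 j\<bar>))"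
    by (simp add: sum_subtractf sum_distrib_left case_prod_beta)
  also have "\<dots> \<le> M * (real r * 2 * (\<Sum>k<n. \<bar>D1 k\<bar>))"
    using diff_le_2 m_le_M m_pos
    by (intro mult_left_mono sum_pairs_disjoint_support_le) (auto simp: D1_def D2_def)
  finally have "m * (real n - 2) * (\<Sum>k<n. (D1 k)^2) \<le> 2 * real r * M * (\<Sum>k<n. \<bar>D1 k\<bar>)"
    by (simp add: mult_ac)
  then have "(\<Sum>k<n. \<bar>D1 k\<bar>) \<le> real n * (2 * real r * M) / (m * (real n - 2))"
    using sum_abs_le_if_sum_squares_le[of "{..<n}" "m * (real n - 2)" "2 * real r * M" D1]
      n_ge_3 m_pos m_le_M by (simp add: mult.assoc)
  moreover have "(\<Sum>k<n. \<bar>D1 k\<bar>) = (\<Sum>k\<in>{r..<n}. \<bar>x k - y k\<bar>)"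
    by (rule sum.mono_neutral_cong_right) (auto simp: D1_def)
  ultimately show ?thesis
    by simp
qed

lemma stationary_diff_row_bound:
  assumes near_x: "\<And>i. i < n \<Longrightarrow> \<bar>x i - \<beta> i\<bar> \<le> 1" and near_y: "\<And>i. i < n \<Longrightarrow> \<bar>y i - \<beta> i\<bar> \<le> 1"
    and "score n G x k = score n G y k" and "k < n"
  shows "\<bar>x k - y k\<bar> * ((real n - 1) * m) \<le> M * (\<Sum>j\<in>{..<n} - {k}. \<bar>x j - y j\<bar>)"
proof -
  define D where "D i = x i - y i" for i
  have "(\<Sum>j\<in>{..<n} - {k}. m * (D k)^2 - M * \<bar>D k\<bar> * \<bar>D j\<bar>)
      \<le> (\<Sum>j\<in>{..<n} - {k}. D k * (edge_prob (x k + x j) - edge_prob (y k + y j)))"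
  proof (rule sum_mono)
    fix j assume "j \<in> {..<n} - {k}"
    then obtain w where "m \<le> w" "w \<le> M" "edge_prob (x k + x j) - edge_prob (y k + y j) = w * (D k + D j)"
      using edge_prob_diff_near[of k j x y, OF _ _ _ near_x near_x near_y near_y] \<open>k < n\<close>
      by (auto simp: D_def)
    then show "m * (D k)^2 - M * \<bar>D k\<bar> * \<bar>D j\<bar> \<le> D k * (edge_prob (x k + x j) - edge_prob (y k + y j))"
      using mult_mean_value_ge[of m w M "D k" "D j"] m_pos by simp
  qed
  also have "\<dots> = D k * (score n G y k - score n G x k)"
    unfolding score_def by (simp add: sum_distrib_left[symmetric] sum_subtractf[symmetric])
  also have "\<dots> = 0"
    using assms(3) by simp
  finally have "(\<Sum>j\<in>{..<n} - {k}. m * (D k)^2 - M * \<bar>D k\<bar> * \<bar>D j\<bar>) \<le> 0" .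
  moreover have "(\<Sum>j\<in>{..<n} - {k}. m * (D k)^2 - M * \<bar>D k\<bar> * \<bar>D j\<bar>)
      = (real n - 1) * m * (D k)^2 - M * \<bar>D k\<bar> * (\<Sum>j\<in>{..<n} - {k}. \<bar>D j\<bar>)"
    using \<open>k < n\<close> by (simp add: sum_subtractf sum_distrib_left of_nat_diff)
  ultimately have "\<bar>D k\<bar> * (\<bar>D k\<bar> * ((real n - 1) * m)) \<le> \<bar>D k\<bar> * (M * (\<Sum>j\<in>{..<n} - {k}. \<bar>D j\<bar>))"
    by (simp add: power2_eq_square abs_mult_self_eq algebra_simps)
  moreover have "0 \<le> M * (\<Sum>j\<in>{..<n} - {k}. \<bar>D j\<bar>)"
    using m_pos m_le_M by (simp add: sum_nonneg)
  ultimately show ?thesis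
    by (cases "D k = 0") (auto simp: D_def)
qed

lemma stationary_diff_bound:
  assumes near_x: "\<And>i. i < n \<Longrightarrow> \<bar>x i - \<beta> i\<bar> \<le> 1" and near_y: "\<And>i. i < n \<Longrightarrow> \<bar>y i - \<beta> i\<bar> \<le> 1"
    and score_x: "\<And>k. r \<le> k \<Longrightarrow> k < n \<Longrightarrow> score n G x k = 0"
    and score_y: "\<And>k. r \<le> k \<Longrightarrow> k < n \<Longrightarrow> score n G y k = 0"
    and "r \<le> k" "k < n"
  shows "\<bar>x k - y k\<bar> * ((real n - 1) * m) \<le> M * (real n * (2 * real r * M) / (m * (real n - 2)) + 2 * real r)"
proof -
  define D2 where "D2 j = (if r \<le> j then 0 else x j - y j)" for j
  have "(\<Sum>j\<in>{..<n} - {k}. \<bar>x j - y j\<bar>) \<le> (\<Sum>j<n. \<bar>x j - y j\<bar>)"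
    by (intro sum_mono2) auto
  also have "\<dots> = (\<Sum>j\<in>{r..<n}. \<bar>x j - y j\<bar>) + (\<Sum>j<n. \<bar>D2 j\<bar>)"
  proof -
    have "(\<Sum>j<n. \<bar>x j - y j\<bar>) = (\<Sum>j<n. (if r \<le> j then \<bar>x j - y j\<bar> else 0) + \<bar>D2 j\<bar>)"
      by (intro sum.cong) (auto simp: D2_def)
    moreover have "(\<Sum>j<n. if r \<le> j then \<bar>x j - y j\<bar> else 0) = (\<Sum>j\<in>{r..<n}. \<bar>x j - y j\<bar>)"
      by (rule sum.mono_neutral_cong_right) auto
    ultimately show ?thesis
      by (simp add: sum.distrib)
  qed
  also have "\<dots> \<le> real n * (2 * real r * M) / (m * (real n - 2)) + real r * 2"
  proof (intro add_mono sum_abs_le_if_supported_below)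
    show "\<bar>D2 j\<bar> \<le> 2" if "j < n" "j < r" for j
      using near_x[OF \<open>j < n\<close>] near_y[OF \<open>j < n\<close>] by (auto simp: D2_def abs_le_iff)
  qed (use stationary_diff_l1_bound[OF near_x near_y score_x score_y] in \<open>auto simp: D2_def\<close>)
  finally have "M * (\<Sum>j\<in>{..<n} - {k}. \<bar>x j - y j\<bar>)
      \<le> M * (real n * (2 * real r * M) / (m * (real n - 2)) + 2 * real r)"
    using m_pos m_le_M by (simp add: mult_left_mono mult.commute)
  moreover have "score n G x k = score n G y k"
    using score_x score_y \<open>r \<le> k\<close> \<open>k < n\<close> by simp
  ultimately show ?thesis
    using stationary_diff_row_bound[OF near_x near_y _ \<open>k < n\<close>] by fastforce
qed

lemma boundary_row_sum_ge:
  assumes near: "\<And>i. i < n \<Longrightarrow> \<bar>x i - \<beta> i\<bar> \<le> 1" and "k < n"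
    and sg: "sg = 1 \<or> sg = -1" and "x k - \<beta> k = sg"
  shows "m * ((real n - 1) - (\<Sum>j<n. \<bar>x j - \<beta> j\<bar>))
      \<le> sg * (\<Sum>j\<in>{..<n} - {k}. edge_prob (x k + x j) - edge_prob (\<beta> k + \<beta> j))"
proof -
  define u where "u j = x j - \<beta> j" for j
  have "u k = sg"
    by (simp add: u_def assms(4))
  have pair_lb: "m * (1 + sg * u j) \<le> sg * (edge_prob (x k + x j) - edge_prob (\<beta> k + \<beta> j))"
    if j: "j \<in> {..<n} - {k}" for j
  proof -
    obtain w where "m \<le> w" and w: "edge_prob (x k + x j) - edge_prob (\<beta> k + \<beta> j) = w * (u k + u j)"
      using edge_prob_diff_near[of k j x \<beta>, OF _ _ _ near near] j \<open>k < n\<close> by (auto simp: u_def)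
    have "0 \<le> 1 + sg * u j"
      using sg near[of j] j by (auto simp: u_def abs_le_iff)
    then have "m * (1 + sg * u j) \<le> w * (1 + sg * u j)"
      using \<open>m \<le> w\<close> by (rule mult_right_mono[rotated])
    also have "\<dots> = sg * (w * (u k + u j))"
      using sg \<open>u k = sg\<close> by (elim disjE) (simp_all add: algebra_simps)
    finally show ?thesis
      unfolding w .
  qed
  have "- (\<Sum>j<n. \<bar>u j\<bar>) \<le> (\<Sum>j\<in>{..<n} - {k}. sg * u j)"
  proof -
    have "(\<Sum>j\<in>{..<n} - {k}. - (sg * u j)) \<le> (\<Sum>j\<in>{..<n} - {k}. \<bar>u j\<bar>)"
      using sg by (intro sum_mono) auto
    also have "\<dots> \<le> (\<Sum>j<n. \<bar>u j\<bar>)"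
      by (intro sum_mono2) auto
    finally show ?thesis
      by (simp add: sum_negf)
  qed
  then have "m * ((real n - 1) - (\<Sum>j<n. \<bar>u j\<bar>)) \<le> m * ((real n - 1) + (\<Sum>j\<in>{..<n} - {k}. sg * u j))"
    using m_pos by (intro mult_left_mono) auto
  also have "\<dots> = (\<Sum>j\<in>{..<n} - {k}. m * (1 + sg * u j))"
    using \<open>k < n\<close> by (simp add: sum.distrib sum_distrib_left[symmetric] of_nat_diff)
  also have "\<dots> \<le> sg * (\<Sum>j\<in>{..<n} - {k}. edge_prob (x k + x j) - edge_prob (\<beta> k + \<beta> j))"
    unfolding sum_distrib_left using pair_lb by (intro sum_mono) auto
  finally show ?thesis
    by (simp add: u_def)
qed

context
  fixes G :: "nat \<times> nat \<Rightarrow> bool" and \<epsilon> :: real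
  assumes score_small: "\<And>k. k < n \<Longrightarrow> \<bar>score n G \<beta> k\<bar> \<le> \<epsilon>"
    and eps_small: "2 * \<epsilon> < m * (real n - 1)"
    and l1_small: "real n * \<epsilon> / (m * (real n - 2)) \<le> (real n - 1) / 2"
begin

lemma param_box_maximiser_l1_bound:
  assumes x_box: "x \<in> param_box \<beta> r n" and max: "\<forall>z\<in>param_box \<beta> r n. loglik n G z \<le> loglik n G x"
  shows "(\<Sum>k<n. \<bar>x k - \<beta> k\<bar>) \<le> (real n - 1) / 2"
proof -
  define u where "u k = x k - \<beta> k" for k
  note near = param_box_dist_le[OF x_box]
  have "\<beta> \<in> param_box \<beta> r n"
    unfolding mem_param_box by simp
  from loglik_deriv_nonpos_at_param_box_maximiser[OF x_box max this]
  have deriv_x: "0 \<le> loglik_deriv n G x u"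
    unfolding loglik_deriv_def u_def by (simp add: sum_subtractf algebra_simps)
  have deriv_\<beta>: "loglik_deriv n G \<beta> u \<le> \<epsilon> * (\<Sum>k<n. \<bar>u k\<bar>)"
    unfolding loglik_deriv_def sum_distrib_left
  proof (rule sum_mono)
    fix k assume "k \<in> {..<n}"
    then have "\<bar>u k * score n G \<beta> k\<bar> \<le> \<bar>u k\<bar> * \<epsilon>"
      using score_small by (simp add: abs_mult mult_left_mono)
    then show "u k * score n G \<beta> k \<le> \<epsilon> * \<bar>u k\<bar>"
      by (simp add: abs_le_iff mult.commute)
  qed
  have pair_lb: "m * (u i + u j)^2 \<le> (u i + u j) * (edge_prob (x i + x j) - edge_prob (\<beta> i + \<beta> j))"
    if ij: "i < j" "j < n" for i j
  proof -
    obtain w where "m \<le> w" and w: "edge_prob (x i + x j) - edge_prob (\<beta> i + \<beta> j) = w * (u i + u j)"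
      using edge_prob_diff_near[of i j x \<beta>, OF _ _ _ near near] ij by (auto simp: u_def)
    then have "m * (u i + u j)^2 \<le> w * (u i + u j)^2"
      by (intro mult_right_mono) auto
    then show ?thesis
      unfolding w by (simp add: power2_eq_square mult_ac)
  qed
  have "m * ((real n - 2) * (\<Sum>k<n. (u k)^2)) \<le> m * (\<Sum>(i, j)\<in>pairs n. (u i + u j)^2)"
    using m_pos by (intro mult_left_mono) (simp_all add: sum_pairs_square)
  also have "\<dots> = (\<Sum>(i, j)\<in>pairs n. m * (u i + u j)^2)"
    by (simp add: sum_distrib_left case_prod_beta)
  also have "\<dots> \<le> (\<Sum>(i, j)\<in>pairs n. (u i + u j) * (edge_prob (x i + x j) - edge_prob (\<beta> i + \<beta> j)))"
    using pair_lb by (intro sum_mono) auto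
  also have "\<dots> = loglik_deriv n G \<beta> u - loglik_deriv n G x u"
    unfolding loglik_deriv_eq_sum_pairs by (simp add: sum_subtractf[symmetric] case_prod_beta algebra_simps)
  also have "\<dots> \<le> \<epsilon> * (\<Sum>k<n. \<bar>u k\<bar>)"
    using deriv_x deriv_\<beta> by linarith
  finally have "(\<Sum>k<n. \<bar>u k\<bar>) \<le> real n * \<epsilon> / (m * (real n - 2))"
    using sum_abs_le_if_sum_squares_le[of "{..<n}" "m * (real n - 2)" \<epsilon> u]
      score_small[of 0] n_ge_3 m_pos by (simp add: mult.assoc)
  with l1_small show ?thesis
    unfolding u_def by linarith
qed

lemma param_box_maximiser_interior:
  assumes x_box: "x \<in> param_box \<beta> r n" and max: "\<forall>z\<in>param_box \<beta> r n. loglik n G z \<le> loglik n G x"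
    and "r \<le> k" "k < n"
  shows "\<bar>x k - \<beta> k\<bar> < 1"
proof (rule ccontr)
  (* Moving a boundary coordinate back to beta_k stays in the box, so the score there must point
     outwards; but the l1 bound makes it point inwards. *)
  define sg where "sg = x k - \<beta> k"
  assume "\<not> \<bar>x k - \<beta> k\<bar> < 1"
  then have sg: "sg = 1 \<or> sg = -1"
    using param_box_dist_le[OF x_box \<open>k < n\<close>] by (auto simp: sg_def abs_if split: if_splits)
  have score_diff: "score n G \<beta> k - score n G x k
      = (\<Sum>j\<in>{..<n} - {k}. edge_prob (x k + x j) - edge_prob (\<beta> k + \<beta> j))"
    unfolding score_def by (simp add: sum_subtractf[symmetric])
  have "- sg * score n G x k \<le> 0"
    using sg by (intro score_sign_at_param_box_maximiser[OF x_box max \<open>r \<le> k\<close> \<open>k < n\<close>])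
      (auto simp: sg_def)
  moreover have "m * ((real n - 1) / 2) \<le> m * ((real n - 1) - (\<Sum>j<n. \<bar>x j - \<beta> j\<bar>))"
    using param_box_maximiser_l1_bound[OF x_box max] m_pos by (intro mult_left_mono) auto
  moreover have "m * ((real n - 1) - (\<Sum>j<n. \<bar>x j - \<beta> j\<bar>)) \<le> sg * (score n G \<beta> k - score n G x k)"
    unfolding score_diff using boundary_row_sum_ge[OF param_box_dist_le[OF x_box] \<open>k < n\<close> sg sg_def[symmetric]] .
  moreover have "sg * (score n G \<beta> k - score n G x k) = sg * score n G \<beta> k - sg * score n G x k"
    by (simp add: right_diff_distrib)
  moreover have "sg * score n G \<beta> k \<le> \<epsilon>"
    using score_small[OF \<open>k < n\<close>] sg by (auto simp: abs_le_iff)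
  moreover have "m * ((real n - 1) / 2) = m * (real n - 1) / 2"
    by simp
  ultimately show False
    using eps_small by linarith
qed

lemma param_box_maximiser_stationary:
  assumes x_box: "x \<in> param_box \<beta> r n" and max: "\<forall>z\<in>param_box \<beta> r n. loglik n G z \<le> loglik n G x"
    and "r \<le> k" "k < n"
  shows "score n G x k = 0"
proof -
  define d where "d = 1 - \<bar>x k - \<beta> k\<bar>"
  have "0 < d"
    using param_box_maximiser_interior[OF assms] by (simp add: d_def)
  have "c * score n G x k \<le> 0" if "\<bar>c\<bar> \<le> d" for c
    using that by (intro score_sign_at_param_box_maximiser[OF assms]) (auto simp: d_def abs_le_iff)
  from this[of d] this[of "- d"] show ?thesis
    using \<open>0 < d\<close> by (auto simp: mult_le_0_iff zero_le_mult_iff)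
qed

lemma exists_stationary_in_param_box:
  "\<exists>x\<in>param_box \<beta> r n. \<forall>k. r \<le> k \<longrightarrow> k < n \<longrightarrow> score n G x k = 0"
proof -
  obtain x where "x \<in> param_box \<beta> r n" and "\<forall>z\<in>param_box \<beta> r n. loglik n G z \<le> loglik n G x"
    using exists_param_box_maximiser by blast
  with param_box_maximiser_stationary show ?thesis
    by blast
qed

lemma mle_close_to_restricted_mle:
  "(\<exists>b. is_mle n G b) \<and> (\<exists>b0. is_restricted_mle n r \<beta> G b0) \<and>
   (\<forall>b b0. is_mle n G b \<longrightarrow> is_restricted_mle n r \<beta> G b0 \<longrightarrow>
      (\<forall>k\<in>{r..<n}. \<bar>b k - b0 k\<bar> * ((real n - 1) * m)
                     \<le> M * (real n * (2 * real r * M) / (m * (real n - 2)) + 2 * real r)))"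
proof -
  obtain x where x_box: "x \<in> param_box \<beta> 0 n" and score_x: "\<And>k. 0 \<le> k \<Longrightarrow> k < n \<Longrightarrow> score n G x k = 0"
    using exists_stationary_in_param_box[of 0] by auto
  obtain x0 where x0_box: "x0 \<in> param_box \<beta> r n"
    and score_x0: "\<And>k. r \<le> k \<Longrightarrow> k < n \<Longrightarrow> score n G x0 k = 0"
    using exists_stationary_in_param_box[of r] by auto
  have "is_restricted_mle n 0 \<beta> G x"
    by (intro restricted_mle_if_stationary score_x) simp_all
  moreover have "is_restricted_mle n r \<beta> G x0"
    by (intro restricted_mle_if_stationary param_box_pinned[OF x0_box] score_x0)
  moreover have "\<bar>b k - b0 k\<bar> * ((real n - 1) * m)
      \<le> M * (real n * (2 * real r * M) / (m * (real n - 2)) + 2 * real r)"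
    if b: "is_restricted_mle n 0 \<beta> G b" and b0: "is_restricted_mle n r \<beta> G b0" and "k \<in> {r..<n}"
    for b b0 k
  proof (rule stationary_diff_bound)
    have "b i = x i" if "i < n" for i
      using restricted_mle_eq_stationary[OF n_ge_3 b _ score_x that] by simp
    then show "\<bar>b i - \<beta> i\<bar> \<le> 1" if "i < n" for i
      using param_box_dist_le[OF x_box that] that by simp
    have "b0 i = x0 i" if "i < n" for i
      using restricted_mle_eq_stationary[OF n_ge_3 b0 param_box_pinned[OF x0_box] score_x0 that] .
    then show "\<bar>b0 i - \<beta> i\<bar> \<le> 1" if "i < n" for i
      using param_box_dist_le[OF x0_box that] that by simp
    show "score n G b i = 0" if "r \<le> i" "i < n" for i
      using restricted_mle_score_eq_0[OF b] that by simp
    show "score n G b0 i = 0" if "r \<le> i" "i < n" for i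
      using restricted_mle_score_eq_0[OF b0] that by simp
  qed (use that in auto)
  ultimately show ?thesis
    unfolding is_mle_iff_restricted_mle_0[where \<beta> = \<beta>] by blast
qed

end

end

definition incident_pairs :: "nat \<Rightarrow> nat \<Rightarrow> (nat \<times> nat) set" where
  "incident_pairs n k = (\<lambda>j. (min k j, max k j)) ` ({..<n} - {k})"

lemma inj_on_incident_pair: "inj_on (\<lambda>j. (min k j, max k j)) ({..<n} - {k})"
  by (rule inj_onI) (auto simp: min_def max_def split: if_splits)

lemma finite_incident_pairs: "finite (incident_pairs n k)"
  unfolding incident_pairs_def by simp

lemma incident_pairs_subset: "k < n \<Longrightarrow> incident_pairs n k \<subseteq> pairs n"
  unfolding incident_pairs_def by (auto simp: min_def max_def)

lemma card_incident_pairs: "k < n \<Longrightarrow> card (incident_pairs n k) = n - 1"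
  unfolding incident_pairs_def by (simp add: card_image[OF inj_on_incident_pair])

lemma score_eq_sum_incident_pairs:
  "score n G \<beta> k = (\<Sum>p\<in>incident_pairs n k. (if G p then 1 else 0) - edge_prob (\<beta> (fst p) + \<beta> (snd p)))"
  unfolding incident_pairs_def score_def sum.reindex[OF inj_on_incident_pair]
  by (intro sum.cong refl) (auto simp: adj_def min_def max_def add.commute)

lemma expectation_edge_indicator:
  assumes "p \<in> pairs n"
  shows "measure_pmf.expectation (beta_model n \<beta>) (\<lambda>G. if G p then 1 else 0 :: real)
       = edge_prob (\<beta> (fst p) + \<beta> (snd p))"
proof -
  have "measure_pmf.expectation (beta_model n \<beta>) (\<lambda>G. if G p then 1 else 0 :: real)
      = measure_pmf.expectation (map_pmf (\<lambda>G. G p) (beta_model n \<beta>)) (\<lambda>b. if b then 1 else 0)"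
    by simp
  also have "map_pmf (\<lambda>G. G p) (beta_model n \<beta>) = bernoulli_pmf (edge_prob (\<beta> (fst p) + \<beta> (snd p)))"
    unfolding beta_model_def using assms by (subst Pi_pmf_component) (auto simp: finite_pairs case_prod_beta)
  finally show ?thesis
    using edge_prob_bounds by simp
qed

lemma prob_score_ge:
  assumes "k < n" and "2 \<le> n" and "0 \<le> t"
  shows "measure_pmf.prob (beta_model n \<beta>) {G. t \<le> \<bar>score n G \<beta> k\<bar>} \<le> 2 * exp (- 2 * t^2 / (real n - 1))"
proof -
  define I where "I = incident_pairs n k"
  define P where "P = measure_pmf (beta_model n \<beta>)"
  define X where "X p G = (if G p then 1 else 0 :: real)" for p and G :: "nat \<times> nat \<Rightarrow> bool"
  define \<mu> where "\<mu> = (\<Sum>p\<in>I. measure_pmf.expectation (beta_model n \<beta>) (X p))"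
  have "prob_space P"
    by (simp add: P_def measure_pmf.prob_space_axioms)
  have \<mu>: "\<mu> = (\<Sum>p\<in>I. edge_prob (\<beta> (fst p) + \<beta> (snd p)))"
    unfolding \<mu>_def X_def using incident_pairs_subset[OF \<open>k < n\<close>]
    by (intro sum.cong refl expectation_edge_indicator) (auto simp: I_def)
  have "prob_space.indep_vars P (\<lambda>_. count_space UNIV) (\<lambda>p G. G p) (pairs n)"
    unfolding P_def beta_model_def by (rule indep_vars_Pi_pmf[OF finite_pairs])
  then have "prob_space.indep_vars P (\<lambda>_. count_space UNIV) (\<lambda>p G. G p) I"
    using prob_space.indep_vars_subset[OF \<open>prob_space P\<close> _ incident_pairs_subset[OF \<open>k < n\<close>]]
    by (simp add: I_def)
  then have indep: "prob_space.indep_vars P (\<lambda>_. borel) X I"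
    using prob_space.indep_vars_compose2[OF \<open>prob_space P\<close>, of _ _ I "\<lambda>_ b. if b then 1 else 0 :: real" "\<lambda>_. borel"]
    by (simp add: X_def[abs_def])
  interpret Hoeffding_ineq P I X "\<lambda>_. 0" "\<lambda>_. 1" \<mu>
  proof (intro Hoeffding_ineq.intro indep_interval_bounded_random_variables.intro
      indep_interval_bounded_random_variables_axioms.intro \<open>prob_space P\<close> indep)
    show "finite I"
      by (simp add: I_def finite_incident_pairs)
    show "AE x in P. X p x \<in> {0..1}" for p
      by (simp add: X_def)
    show "\<mu> \<equiv> \<Sum>p\<in>I. prob_space.expectation P (X p)"
      by (simp add: \<mu>_def P_def)
  qed
  have "{G. t \<le> \<bar>score n G \<beta> k\<bar>} = {G \<in> space P. t \<le> \<bar>(\<Sum>p\<in>I. X p G) - \<mu>\<bar>}"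
    unfolding score_eq_sum_incident_pairs X_def \<mu> by (auto simp: P_def I_def sum_subtractf)
  moreover have "(\<Sum>p\<in>I. ((1::real) - 0)^2) = real n - 1"
    using card_incident_pairs[OF \<open>k < n\<close>] \<open>2 \<le> n\<close> by (simp add: I_def of_nat_diff)
  ultimately show ?thesis
    using Hoeffding_ineq_abs_ge[OF \<open>0 \<le> t\<close>] \<open>2 \<le> n\<close> by (simp add: P_def)
qed

lemma prob_scores_le:
  assumes "3 \<le> n"
  shows "1 - 2 / real n \<le> measure_pmf.prob (beta_model n \<beta>) {G. \<forall>k<n. \<bar>score n G \<beta> k\<bar> \<le> sqrt (real n * ln (real n))}"
proof -
  define t where "t = sqrt (real n * ln (real n))"
  define P where "P = beta_model n \<beta>"
  have "0 < ln (real n)"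
    using assms by simp
  then have "0 \<le> t" and t_sq: "t^2 = real n * ln (real n)"
    by (simp_all add: t_def)
  have tail: "2 * exp (- 2 * t^2 / (real n - 1)) \<le> 2 / (real n)^2"
  proof -
    have "(real n - 1) * ln (real n) \<le> real n * ln (real n)"
      using \<open>0 < ln (real n)\<close> by (intro mult_right_mono) auto
    then have "- 2 * t^2 / (real n - 1) \<le> - (ln (real n) + ln (real n))"
      using assms unfolding t_sq by (simp add: field_simps)
    then have "exp (- 2 * t^2 / (real n - 1)) \<le> exp (- (ln (real n) + ln (real n)))"
      by simp
    also have "\<dots> = inverse (exp (ln (real n)) * exp (ln (real n)))"
      by (simp add: exp_minus flip: exp_add)
    also have "\<dots> = 1 / (real n)^2"
      using assms by (simp add: power2_eq_square divide_inverse)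
    finally show ?thesis
      by simp
  qed
  have "measure_pmf.prob P (- {G. \<forall>k<n. \<bar>score n G \<beta> k\<bar> \<le> t}) \<le> measure_pmf.prob P (\<Union>k<n. {G. t \<le> \<bar>score n G \<beta> k\<bar>})"
    by (intro measure_pmf.finite_measure_mono) auto
  also have "\<dots> \<le> (\<Sum>k<n. measure_pmf.prob P {G. t \<le> \<bar>score n G \<beta> k\<bar>})"
    by (intro measure_UNION_le) auto
  also have "\<dots> \<le> (\<Sum>k<n. 2 / (real n)^2)"
    using prob_score_ge[where n = n and \<beta> = \<beta> and t = t] assms \<open>0 \<le> t\<close> tail unfolding P_def
    by (intro sum_mono) (fastforce intro: order_trans)
  also have "\<dots> = 2 / real n"
    by (simp add: power2_eq_square)
  finally show ?thesis
    using measure_pmf.prob_compl[of "{G. \<forall>k<n. \<bar>score n G \<beta> k\<bar> \<le> t}" P] by (simp add: P_def t_def Compl_eq_Diff_UNIV)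
qed

definition inverse_edge_vars :: "nat \<Rightarrow> (nat \<Rightarrow> real) \<Rightarrow> real set" where
  "inverse_edge_vars n \<beta> = (\<lambda>(i, j). 1 / edge_var (\<beta> i + \<beta> j)) ` {(i, j). i < n \<and> j < n \<and> i \<noteq> j}"

lemma bn_eq_Max: "bn n \<beta> = Max (inverse_edge_vars n \<beta>)"
  and cn_eq_Min: "cn n \<beta> = Min (inverse_edge_vars n \<beta>)"
proof -
  have "{(1 + exp (\<beta> i + \<beta> j))^2 / exp (\<beta> i + \<beta> j) | i j. i < n \<and> j < n \<and> i \<noteq> j} = inverse_edge_vars n \<beta>"
    unfolding inverse_edge_vars_def edge_var_def by auto
  then show "bn n \<beta> = Max (inverse_edge_vars n \<beta>)" and "cn n \<beta> = Min (inverse_edge_vars n \<beta>)"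
    unfolding bn_def cn_def by simp_all
qed

lemma finite_inverse_edge_vars: "finite (inverse_edge_vars n \<beta>)"
  unfolding inverse_edge_vars_def by (rule finite_imageI, rule finite_subset[of _ "{..<n} \<times> {..<n}"]) auto

lemma inverse_edge_vars_nonempty:
  assumes "2 \<le> n"
  shows "inverse_edge_vars n \<beta> \<noteq> {}"
proof -
  have "(0, 1) \<in> {(i, j). i < n \<and> j < n \<and> i \<noteq> j}"
    using assms by simp
  then show ?thesis
    unfolding inverse_edge_vars_def by blast
qed

lemma inverse_edge_var_mem: "i < n \<Longrightarrow> j < n \<Longrightarrow> i \<noteq> j \<Longrightarrow> 1 / edge_var (\<beta> i + \<beta> j) \<in> inverse_edge_vars n \<beta>"
  unfolding inverse_edge_vars_def by auto

lemma cn_le_inverse_edge_var: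
  "i < n \<Longrightarrow> j < n \<Longrightarrow> i \<noteq> j \<Longrightarrow> cn n \<beta> \<le> 1 / edge_var (\<beta> i + \<beta> j)"
  unfolding cn_eq_Min by (intro Min_le finite_inverse_edge_vars inverse_edge_var_mem)

lemma inverse_edge_var_le_bn:
  "i < n \<Longrightarrow> j < n \<Longrightarrow> i \<noteq> j \<Longrightarrow> 1 / edge_var (\<beta> i + \<beta> j) \<le> bn n \<beta>"
  unfolding bn_eq_Max by (intro Max_ge finite_inverse_edge_vars inverse_edge_var_mem)

lemma two_le_cn:
  assumes "2 \<le> n"
  shows "2 \<le> cn n \<beta>"
proof -
  have "cn n \<beta> \<in> inverse_edge_vars n \<beta>"
    unfolding cn_eq_Min using finite_inverse_edge_vars inverse_edge_vars_nonempty[OF assms] by (rule Min_in)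
  moreover have "2 \<le> 1 / edge_var t" for t
    unfolding inverse_edge_var using exp_gt_zero[of t] exp_gt_zero[of "- t"] by linarith
  ultimately show ?thesis
    unfolding inverse_edge_vars_def by auto
qed

lemma cn_le_bn: "2 \<le> n \<Longrightarrow> cn n \<beta> \<le> bn n \<beta>"
  using cn_le_inverse_edge_var[of 0 n 1 \<beta>] inverse_edge_var_le_bn[of 0 n 1 \<beta>] by simp

lemma edge_var_bounded_near_bn_cn:
  assumes "2 \<le> n" "i < n" "j < n" "i \<noteq> j"
  shows "edge_var_bounded_near (exp (- 2) / bn n \<beta>) (exp 2 / cn n \<beta>) (\<beta> i + \<beta> j)"
  unfolding edge_var_bounded_near_def
proof (intro allI impI conjI)
  fix s assume s: "\<bar>s - (\<beta> i + \<beta> j)\<bar> \<le> 2"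
  define v where "v = edge_var (\<beta> i + \<beta> j)"
  have "0 < v"
    by (simp add: v_def edge_var_pos)
  have "1 / bn n \<beta> \<le> v"
    using inverse_edge_var_le_bn[OF assms(2-4), of \<beta>] \<open>0 < v\<close> two_le_cn[OF assms(1), of \<beta>]
      cn_le_bn[OF assms(1), of \<beta>] by (simp add: v_def field_simps)
  then have "exp (- 2) / bn n \<beta> \<le> exp (- 2) * v"
    by (simp add: divide_inverse mult_left_mono)
  also have "\<dots> \<le> edge_var s"
    using edge_var_ratio[OF s] by (simp add: v_def)
  finally show "exp (- 2) / bn n \<beta> \<le> edge_var s" .
  have "v \<le> 1 / cn n \<beta>"
    using cn_le_inverse_edge_var[OF assms(2-4), of \<beta>] \<open>0 < v\<close> two_le_cn[OF assms(1), of \<beta>]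
    by (simp add: v_def field_simps)
  have "exp (- 2) * edge_var s \<le> v"
    using edge_var_ratio[of "\<beta> i + \<beta> j" s 2] s by (simp add: v_def abs_minus_commute)
  then have "edge_var s \<le> exp 2 * v"
    by (simp add: exp_minus field_simps)
  also have "\<dots> \<le> exp 2 / cn n \<beta>"
    using \<open>v \<le> 1 / cn n \<beta>\<close> by (simp add: divide_inverse mult_left_mono)
  finally show "edge_var s \<le> exp 2 / cn n \<beta>" .
qed

lemma threshold_conditions:
  fixes m \<epsilon> :: real
  assumes "4 \<le> n" and "0 < m" and "\<epsilon> \<le> m * real n / 8"
  shows "2 * \<epsilon> < m * (real n - 1)" and "real n * \<epsilon> / (m * (real n - 2)) \<le> (real n - 1) / 2"
proof -
  have "m * 4 \<le> m * real n"
    using assms(1,2) by (intro mult_left_mono) auto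
  moreover have "m * (real n - 1) = m * real n - m"
    by (simp add: algebra_simps)
  ultimately show "2 * \<epsilon> < m * (real n - 1)"
    using assms(2,3) by linarith
  have quadratic: "(real n)^2 / 4 \<le> (real n - 1) * (real n - 2)"
  proof -
    have "(real n - 1) * (real n - 2) - (real n)^2 / 4 = 3 / 4 * ((real n - 4) * real n) + 2"
      by (simp add: algebra_simps power2_eq_square)
    moreover have "0 \<le> (real n - 4) * real n"
      using assms(1) by simp
    ultimately show ?thesis
      by linarith
  qed
  have "real n * \<epsilon> \<le> real n * (m * real n / 8)"
    using assms(3) by (intro mult_left_mono) auto
  also have "\<dots> = m * ((real n)^2 / 4) / 2"
    by (simp add: power2_eq_square)
  also have "\<dots> \<le> m * ((real n - 1) * (real n - 2)) / 2"
    using quadratic assms(2) by (intro divide_right_mono mult_left_mono) auto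
  finally have "real n * \<epsilon> \<le> (real n - 1) / 2 * (m * (real n - 2))"
    by (simp add: mult_ac)
  then show "real n * \<epsilon> / (m * (real n - 2)) \<le> (real n - 1) / 2"
    using assms by (simp add: pos_divide_le_eq)
qed

lemma stationary_diff_bound_le:
  fixes X m M N r :: real
  assumes "0 < m" "m \<le> M" "4 \<le> N" "0 \<le> r"
    and X: "X * ((N - 1) * m) \<le> M * (N * (2 * r * M) / (m * (N - 2)) + 2 * r)"
  shows "X \<le> 12 * r * (M / m)^2 / N"
proof -
  define \<kappa> where "\<kappa> = M / m"
  have "1 \<le> \<kappa>" and M: "M = \<kappa> * m"
    using assms by (simp_all add: \<kappa>_def field_simps)
  have "N * (2 * r * M) / (m * (N - 2)) = N / (N - 2) * (2 * r * \<kappa>)"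
    using assms by (simp add: M field_simps)
  also have "\<dots> \<le> 2 * (2 * r * \<kappa>)"
    using assms \<open>1 \<le> \<kappa>\<close> by (intro mult_right_mono) (auto simp: field_simps)
  finally have quotient: "N * (2 * r * M) / (m * (N - 2)) \<le> 4 * r * \<kappa>"
    by simp
  have "2 * r \<le> 2 * r * \<kappa>"
    using mult_left_mono[OF \<open>1 \<le> \<kappa>\<close>, of "2 * r"] assms(4) by simp
  have "X * ((N - 1) * m) \<le> M * (4 * r * \<kappa> + 2 * r * \<kappa>)"
    using quotient \<open>2 * r \<le> 2 * r * \<kappa>\<close> assms(1,2)
    by (intro order_trans[OF X] mult_left_mono add_mono) auto
  also have "\<dots> = 6 / (N - 1) * (r * \<kappa>^2) * ((N - 1) * m)"
    using assms by (simp add: M power2_eq_square field_simps)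
  finally have "X \<le> 6 / (N - 1) * (r * \<kappa>^2)"
    using assms by (simp add: mult_le_cancel_right_pos pos_le_divide_eq)
  also have "\<dots> \<le> 12 / N * (r * \<kappa>^2)"
    using assms by (intro mult_right_mono) (auto simp: field_simps)
  finally show ?thesis
    by (simp add: \<kappa>_def)
qed

lemma sqrt_n_ln_n_le:
  fixes B Cc :: real
  assumes "4 \<le> n" "2 \<le> Cc" "Cc \<le> B"
    and small: "B ^ 3 / Cc \<le> real n / (64 * exp 4 * ln (real n))"
  shows "sqrt (real n * ln (real n)) \<le> real n / (8 * exp 2 * B)"
proof -
  have "0 < ln (real n)" "0 < B" "0 < Cc"
    using assms by auto
  have "B^2 \<le> B^3 / Cc"
    using \<open>Cc \<le> B\<close> \<open>0 < Cc\<close> \<open>0 < B\<close> by (simp add: field_simps power2_eq_square power3_eq_cube)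
  then have "B^2 * (real n * ln (real n)) \<le> real n / (64 * exp 4 * ln (real n)) * (real n * ln (real n))"
    using small \<open>0 < ln (real n)\<close> by (intro mult_right_mono) auto
  also have "\<dots> = (real n / (8 * exp 2))^2"
    using \<open>0 < ln (real n)\<close> by (simp add: power2_eq_square field_simps flip: exp_add)
  finally have "(B * sqrt (real n * ln (real n)))^2 \<le> (real n / (8 * exp 2))^2"
    using \<open>0 < ln (real n)\<close> by (simp add: power_mult_distrib)
  then have "B * sqrt (real n * ln (real n)) \<le> real n / (8 * exp 2)"
    by (rule power2_le_imp_le) simp
  then show ?thesis
    using \<open>0 < B\<close> by (simp add: field_simps)
qed

lemma window_diff_bound_le:
  fixes X B Cc :: real
  assumes "4 \<le> n" "2 \<le> Cc" "Cc \<le> B"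
    and X: "X * ((real n - 1) * (exp (- 2) / B))
      \<le> exp 2 / Cc * (real n * (2 * real r * (exp 2 / Cc)) / (exp (- 2) / B * (real n - 2)) + 2 * real r)"
  shows "X \<le> 12 * real r * exp 8 * B ^ 3 * ln (real n) / (real n * Cc)"
proof -
  have "1 \<le> ln (real n)"
    using exp_le \<open>4 \<le> n\<close> by (subst ln_ge_iff) auto
  have "exp (- 2) / B \<le> exp 2 / Cc"
    using assms by (intro frac_le) auto
  then have "X \<le> 12 * real r * (exp 2 / Cc / (exp (- 2) / B))^2 / real n"
    using stationary_diff_bound_le[OF _ _ _ _ X] assms by simp
  also have "\<dots> = 12 * real r * (exp 8 * B^2 / Cc^2) / real n"
    using assms by (simp add: power2_eq_square field_simps exp_minus flip: exp_add)
  also have "\<dots> \<le> 12 * real r * (exp 8 * B^3 * ln (real n) / Cc) / real n"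
  proof -
    have "1 * 1 * 1 \<le> B * Cc * ln (real n)"
      using assms \<open>1 \<le> ln (real n)\<close> by (intro mult_mono) auto
    then have "exp 8 * B^2 / Cc^2 \<le> exp 8 * B^3 * ln (real n) / Cc"
      using assms by (simp add: field_simps power2_eq_square power3_eq_cube)
    then show ?thesis
      by (intro divide_right_mono mult_left_mono) auto
  qed
  finally show ?thesis
    by (simp add: field_simps)
qed

lemma prob_mle_close_to_restricted_mle:
  fixes \<beta> :: "nat \<Rightarrow> real"
  assumes "4 \<le> n" and small: "bn n \<beta> ^ 3 / cn n \<beta> \<le> real n / (64 * exp 4 * ln (real n))"
  shows "1 - 2 / real n \<le> measure_pmf.prob (beta_model n \<beta>)
           {G. (\<exists>b. is_mle n G b) \<and> (\<exists>b0. is_restricted_mle n r \<beta> G b0) \<and>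
               (\<forall>b b0. is_mle n G b \<longrightarrow> is_restricted_mle n r \<beta> G b0 \<longrightarrow>
                  (\<forall>i\<in>{r..<n}. \<bar>b i - b0 i\<bar>
                      \<le> 12 * real r * exp 8 * bn n \<beta> ^ 3 * ln (real n) / (real n * cn n \<beta>)))}"
    (is "_ \<le> measure_pmf.prob _ ?event")
proof -
  define \<epsilon> where "\<epsilon> = sqrt (real n * ln (real n))"
  define m where "m = exp (- 2) / bn n \<beta>"
  define M where "M = exp 2 / cn n \<beta>"
  have "2 \<le> cn n \<beta>" "cn n \<beta> \<le> bn n \<beta>"
    using two_le_cn[of n \<beta>] cn_le_bn[of n \<beta>] \<open>4 \<le> n\<close> by auto
  then have "0 < m" "m \<le> M"
    by (auto simp: m_def M_def intro: frac_le)
  have window: "\<And>i j. i < n \<Longrightarrow> j < n \<Longrightarrow> i \<noteq> j \<Longrightarrow> edge_var_bounded_near m M (\<beta> i + \<beta> j)"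
    unfolding m_def M_def using \<open>4 \<le> n\<close> by (intro edge_var_bounded_near_bn_cn) auto
  have \<epsilon>_le: "\<epsilon> \<le> m * real n / 8"
    using sqrt_n_ln_n_le[OF \<open>4 \<le> n\<close> \<open>2 \<le> cn n \<beta>\<close> \<open>cn n \<beta> \<le> bn n \<beta>\<close> small]
    by (simp add: \<epsilon>_def m_def exp_minus field_simps)
  have "{G. \<forall>k<n. \<bar>score n G \<beta> k\<bar> \<le> \<epsilon>} \<subseteq> ?event"
  proof (rule subsetI)
    fix G assume "G \<in> {G. \<forall>k<n. \<bar>score n G \<beta> k\<bar> \<le> \<epsilon>}"
    then have score_small: "\<And>k. k < n \<Longrightarrow> \<bar>score n G \<beta> k\<bar> \<le> \<epsilon>"
      by simp
    have rescale: "\<bar>b i - b0 i\<bar> \<le> 12 * real r * exp 8 * bn n \<beta> ^ 3 * ln (real n) / (real n * cn n \<beta>)"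
      if "\<bar>b i - b0 i\<bar> * ((real n - 1) * m) \<le> M * (real n * (2 * real r * M) / (m * (real n - 2)) + 2 * real r)"
      for b b0 :: "nat \<Rightarrow> real" and i
      using window_diff_bound_le[OF \<open>4 \<le> n\<close> \<open>2 \<le> cn n \<beta>\<close> \<open>cn n \<beta> \<le> bn n \<beta>\<close>] that
      unfolding m_def M_def by blast
    have "3 \<le> n"
      using \<open>4 \<le> n\<close> by simp
    note close = mle_close_to_restricted_mle[OF \<open>3 \<le> n\<close> \<open>0 < m\<close> window score_small
        threshold_conditions[OF \<open>4 \<le> n\<close> \<open>0 < m\<close> \<epsilon>_le], of r]
    show "G \<in> ?event"
    proof (intro CollectI conjI allI impI ballI)
      show "\<exists>b. is_mle n G b" and "\<exists>b0. is_restricted_mle n r \<beta> G b0"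
        using close by blast+
      fix b b0 i
      assume "is_mle n G b" "is_restricted_mle n r \<beta> G b0" "i \<in> {r..<n}"
      with close show "\<bar>b i - b0 i\<bar> \<le> 12 * real r * exp 8 * bn n \<beta> ^ 3 * ln (real n) / (real n * cn n \<beta>)"
        by (blast intro: rescale)
    qed
  qed
  then have "measure_pmf.prob (beta_model n \<beta>) {G. \<forall>k<n. \<bar>score n G \<beta> k\<bar> \<le> \<epsilon>}
      \<le> measure_pmf.prob (beta_model n \<beta>) ?event"
    by (rule measure_pmf.finite_measure_mono) simp
  moreover have "1 - 2 / real n \<le> measure_pmf.prob (beta_model n \<beta>) {G. \<forall>k<n. \<bar>score n G \<beta> k\<bar> \<le> \<epsilon>}"
    using prob_scores_le[of n \<beta>] \<open>4 \<le> n\<close> by (simp add: \<epsilon>_def)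
  ultimately show ?thesis
    by linarith
qed

theorem lemma12:
  fixes \<beta> :: "nat \<Rightarrow> nat \<Rightarrow> real" and r :: nat
  assumes "r \<ge> 1"
    and "(\<lambda>n. bn n (\<beta> n) ^ 3 / cn n (\<beta> n)) \<in> o(\<lambda>n. real n / ln (real n))"
  shows "\<exists>C K. C > 0 \<and> K > 0 \<and> (\<forall>\<^sub>F n in sequentially.
           measure_pmf.prob (beta_model n (\<beta> n))
             {G. (\<exists>b. is_mle n G b) \<and> (\<exists>b0. is_restricted_mle n r (\<beta> n) G b0) \<and>
                 (\<forall>b b0. is_mle n G b \<longrightarrow> is_restricted_mle n r (\<beta> n) G b0 \<longrightarrow>
                    (\<forall>i\<in>{r..<n}. \<bar>b i - b0 i\<bar>
                        \<le> C * bn n (\<beta> n) ^ 3 * ln (real n) / (real n * cn n (\<beta> n))))}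
           \<ge> 1 - K / real n)"
proof -
  define \<delta> :: real where "\<delta> = 1 / (64 * exp 4)"
  have "\<forall>\<^sub>F n in sequentially. \<bar>bn n (\<beta> n) ^ 3 / cn n (\<beta> n)\<bar> \<le> \<delta> * \<bar>real n / ln (real n)\<bar>"
    using landau_o.smallD[OF assms(2), of \<delta>] by (simp add: \<delta>_def)
  moreover have "\<forall>\<^sub>F n in sequentially. 4 \<le> n"
    by (rule eventually_ge_at_top)
  ultimately have "\<forall>\<^sub>F n in sequentially.
      4 \<le> n \<and> bn n (\<beta> n) ^ 3 / cn n (\<beta> n) \<le> real n / (64 * exp 4 * ln (real n))"
  proof eventually_elim
    case (elim n)
    have "bn n (\<beta> n) ^ 3 / cn n (\<beta> n) \<le> \<bar>bn n (\<beta> n) ^ 3 / cn n (\<beta> n)\<bar>"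
      by (rule abs_ge_self)
    also have "\<dots> \<le> \<delta> * \<bar>real n / ln (real n)\<bar>"
      by (rule elim(1))
    also have "\<dots> = real n / (64 * exp 4 * ln (real n))"
      using \<open>4 \<le> n\<close> by (simp add: \<delta>_def)
    finally show ?case
      using \<open>4 \<le> n\<close> by simp
  qed
  then show ?thesis
    using assms(1) prob_mle_close_to_restricted_mle
    by (intro exI[of _ "12 * real r * exp 8"] exI[of _ 2] conjI) (auto elim!: eventually_mono)
qed

end
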